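(* Let $n\in\mathbb{N}$ and $\mu=\sum_{i=1}^n\mu_i$, where the $\mu_i$ are non-negative measures on $\mathbb{R}$ with $\mu_i(\mathbb{R})=a_i>0$ and $\sum_{i=1}^na_i=1$. Let $\nu$ be a probability measure on $\mathbb{R}$ with $H(\nu)<\infty$, and let $\nu_t=D_t^*(\nu)$. Then $$\liminf_{t\to0}\frac{H(\mu*\nu_t)}{|\log t|}=\liminf_{t\to0}\frac{1}{|\log t|}\sum_{i=1}^na_iH(a_i^{-1}\mu_i*\nu_t).$$
   Context: For $t>0$, $D_t:\mathbb{R}\to\mathbb{R}$ is $x\mapsto tx$, and $D_t^*$ denotes push-forward by $D_t$. For non-negative measurable $q$, $H(q(x)\,dx)=\int q\log q\,dx$. In particular $H(\nu)<\infty$ presupposes that $\nu$ is Lebesgue absolutely continuous. *)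

theory Defs
  imports "HOL-Probability.Probability"
begin

definition dilate :: "real \<Rightarrow> real measure \<Rightarrow> real measure" where
  "dilate t M = distr M borel (\<lambda>x. t * x)"

definition sum_meas :: "(nat \<Rightarrow> real measure) \<Rightarrow> nat set \<Rightarrow> real measure" where
  "sum_meas M I = measure_of UNIV (sets borel) (\<lambda>A. \<Sum>i\<in>I. emeasure (M i) A)"

text \<open>Entropy H(q(x) dx) = integral of q log q, with q the Lebesgue density
  (Radon-Nikodym derivative) of the measure, valued in the extended reals:
  positive part minus negative part.\<close>
definition entropy_H :: "real measure \<Rightarrow> ereal" where
  "entropy_H M = (let q = (\<lambda>x. enn2real (RN_deriv lborel M x)) in
     enn2ereal (\<integral>\<^sup>+x. ennreal (q x * ln (q x)) \<partial>lborel)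
       - enn2ereal (\<integral>\<^sup>+x. ennreal (- (q x * ln (q x))) \<partial>lborel))"

end

theory Submission
  imports Defs
begin

text \<open>
  For \<open>t > 0\<close> the density \<open>q\<close> of \<open>\<mu> * \<nu>\<^sub>t\<close> is a.e. the mixture \<open>\<Sum> a\<^sub>i p\<^sub>i\<close> of the
  densities \<open>p\<^sub>i\<close> of \<open>a\<^sub>i\<^sup>-\<^sup>1 \<mu>\<^sub>i * \<nu>\<^sub>t\<close>. Pointwise, convexity of \<open>x ln x\<close> gives
  \<open>q ln q \<le> \<Sum> a\<^sub>i p\<^sub>i ln p\<^sub>i\<close>, and monotonicity of \<open>ln\<close> applied to \<open>a\<^sub>i p\<^sub>i \<le> q\<close> gives
  \<open>\<Sum> a\<^sub>i p\<^sub>i ln p\<^sub>i \<le> q ln q - \<Sum> a\<^sub>i ln a\<^sub>i p\<^sub>i\<close>. Integrating, with \<open>\<integral> p\<^sub>i \<le> 1\<close>, the two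
  sides of the claimed identity differ, before division by \<open>|ln t|\<close>, by at most the constant
  \<open>- \<Sum> a\<^sub>i ln a\<^sub>i\<close>, which disappears in the limit. The entropies are integrals in the
  extended reals; they are well defined because \<open>H(\<nu>\<^sub>t) = H(\<nu>) - ln t < \<infinity>\<close> and, by Jensen's
  inequality, convolving with a probability measure does not increase the positive part of
  \<open>\<integral> p ln p\<close>.
\<close>

section \<open>Integrals with values in the extended reals\<close>

text \<open>Beware that \<open>\<infinity> - \<infinity> = \<infinity>\<close> in \<^typ>\<open>ereal\<close>: the rules below for sums therefore assume
  that the positive parts have finite integrals.\<close>
definition ext_integral :: "'a measure \<Rightarrow> ('a \<Rightarrow> real) \<Rightarrow> ereal" where
  "ext_integral M f =
     enn2ereal (\<integral>\<^sup>+x. ennreal (f x) \<partial>M) - enn2ereal (\<integral>\<^sup>+x. ennreal (- f x) \<partial>M)"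

lemma ennreal_plus_max: "ennreal a + ennreal b = ennreal (max 0 a + max 0 b)"
  by simp

lemma ennreal_add_le: "ennreal (x + y) \<le> ennreal x + ennreal y"
  unfolding ennreal_plus_max by (intro ennreal_leI) (auto simp: max_def)

lemma ennreal_pos_neg_le:
  fixes x y :: real
  assumes "x \<le> y"
  shows "ennreal x + ennreal (- y) \<le> ennreal y + ennreal (- x)"
  unfolding ennreal_plus_max using assms by (intro ennreal_leI) linarith

lemma ennreal_pos_neg_add:
  fixes x y :: real
  shows "ennreal (x + y) + (ennreal (- x) + ennreal (- y))
       = ennreal (- (x + y)) + (ennreal x + ennreal y)"
  unfolding ennreal_plus_max by (rule arg_cong[where f=ennreal]) (auto simp: max_def)

lemma enn2ereal_diff_le:
  fixes a b c d :: ennreal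
  assumes "a \<noteq> \<infinity>" "c \<noteq> \<infinity>" "a + d \<le> c + b"
  shows "enn2ereal a - enn2ereal b \<le> enn2ereal c - enn2ereal d"
proof (cases "b = \<infinity>")
  case True
  with assms(1) show ?thesis by (cases a rule: ennreal_cases) simp_all
next
  case False
  with assms have "d \<noteq> \<infinity>" by (auto simp: top_unique)
  with assms False show ?thesis
    by (cases a rule: ennreal_cases; cases b rule: ennreal_cases; cases c rule: ennreal_cases;
        cases d rule: ennreal_cases) (simp_all del: ennreal_plus add: ennreal_plus[symmetric])
qed

lemma enn2ereal_diff_eq:
  fixes a b c d :: ennreal
  assumes "a \<noteq> \<infinity>" "c \<noteq> \<infinity>" "a + d = c + b"
  shows "enn2ereal a - enn2ereal b = enn2ereal c - enn2ereal d"
  using assms by (intro antisym enn2ereal_diff_le) (simp_all add: add.commute)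

lemma enn2ereal_add_diff:
  fixes a b c d :: ennreal
  assumes "a \<noteq> \<infinity>" "c \<noteq> \<infinity>"
  shows "enn2ereal (a + c) - enn2ereal (b + d) = (enn2ereal a - enn2ereal b) + (enn2ereal c - enn2ereal d)"
  using assms
  by (cases a rule: ennreal_cases; cases c rule: ennreal_cases; cases b rule: ennreal_cases;
      cases d rule: ennreal_cases) (auto simp flip: ennreal_plus)

lemma enn2ereal_cmult_diff:
  fixes a b :: ennreal and c :: real
  assumes "0 \<le> c"
  shows "enn2ereal (ennreal c * a) - enn2ereal (ennreal c * b) = ereal c * (enn2ereal a - enn2ereal b)"
proof (cases "c = 0")
  case False
  with assms have "0 < c" by simp
  then show ?thesis
    by (cases a rule: ennreal_cases; cases b rule: ennreal_cases)
       (auto simp flip: ennreal_mult simp: ereal_mult_infty right_diff_distrib)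
qed simp

lemma ext_integral_cong_AE:
  assumes "AE x in M. f x = g x"
  shows "ext_integral M f = ext_integral M g"
proof -
  have "(\<integral>\<^sup>+x. ennreal (f x) \<partial>M) = (\<integral>\<^sup>+x. ennreal (g x) \<partial>M)"
       "(\<integral>\<^sup>+x. ennreal (- f x) \<partial>M) = (\<integral>\<^sup>+x. ennreal (- g x) \<partial>M)"
    using assms by (auto intro!: nn_integral_cong_AE elim!: eventually_mono)
  then show ?thesis
    unfolding ext_integral_def by simp
qed

lemma ext_integral_eq_top_iff:
  "ext_integral M f = \<infinity> \<longleftrightarrow> (\<integral>\<^sup>+x. ennreal (f x) \<partial>M) = \<infinity>"
  unfolding ext_integral_def
  by (cases "\<integral>\<^sup>+x. ennreal (f x) \<partial>M" rule: ennreal_cases;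
      cases "\<integral>\<^sup>+x. ennreal (- f x) \<partial>M" rule: ennreal_cases) auto

lemma ext_integral_nonneg_eq:
  assumes "\<And>x. 0 \<le> f x"
  shows "ext_integral M f = enn2ereal (\<integral>\<^sup>+x. ennreal (f x) \<partial>M)"
  using assms by (simp add: ext_integral_def ennreal_neg zero_ennreal.rep_eq)

lemma ext_integral_eq_integral:
  assumes "integrable M f"
  shows "ext_integral M f = ereal (integral\<^sup>L M f)"
  using assms unfolding real_integrable_def ext_integral_def real_lebesgue_integral_def[OF assms]
  by (cases "\<integral>\<^sup>+x. ennreal (f x) \<partial>M" rule: ennreal_cases;
      cases "\<integral>\<^sup>+x. ennreal (- f x) \<partial>M" rule: ennreal_cases) auto

lemma ext_integral_mono_AE:
  assumes [measurable]: "f \<in> borel_measurable M" "g \<in> borel_measurable M"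
    and le: "AE x in M. f x \<le> g x"
  shows "ext_integral M f \<le> ext_integral M g"
proof (cases "(\<integral>\<^sup>+x. ennreal (g x) \<partial>M) = \<infinity>")
  case True
  then show ?thesis by (simp add: ext_integral_eq_top_iff[THEN iffD2])
next
  case False
  have "(\<integral>\<^sup>+x. ennreal (f x) \<partial>M) \<le> (\<integral>\<^sup>+x. ennreal (g x) \<partial>M)"
    using le by (intro nn_integral_mono_AE) (auto elim!: eventually_mono intro: ennreal_leI)
  with False have f_fin: "(\<integral>\<^sup>+x. ennreal (f x) \<partial>M) \<noteq> \<infinity>"
    by (auto simp: top_unique)
  have "(\<integral>\<^sup>+x. ennreal (f x) \<partial>M) + (\<integral>\<^sup>+x. ennreal (- g x) \<partial>M)
      = (\<integral>\<^sup>+x. ennreal (f x) + ennreal (- g x) \<partial>M)"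
    by (rule nn_integral_add[symmetric]) simp_all
  also have "\<dots> \<le> (\<integral>\<^sup>+x. ennreal (g x) + ennreal (- f x) \<partial>M)"
    using le by (intro nn_integral_mono_AE) (auto elim!: eventually_mono intro: ennreal_pos_neg_le)
  also have "\<dots> = (\<integral>\<^sup>+x. ennreal (g x) \<partial>M) + (\<integral>\<^sup>+x. ennreal (- f x) \<partial>M)"
    by (rule nn_integral_add) simp_all
  finally have sum_le: "(\<integral>\<^sup>+x. ennreal (f x) \<partial>M) + (\<integral>\<^sup>+x. ennreal (- g x) \<partial>M)
      \<le> (\<integral>\<^sup>+x. ennreal (g x) \<partial>M) + (\<integral>\<^sup>+x. ennreal (- f x) \<partial>M)" .
  show ?thesis
    unfolding ext_integral_def by (rule enn2ereal_diff_le[OF f_fin False sum_le])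
qed

lemma nn_integral_ennreal_add_le:
  assumes [measurable]: "f \<in> borel_measurable M" "g \<in> borel_measurable M"
  shows "(\<integral>\<^sup>+x. ennreal (f x + g x) \<partial>M) \<le> (\<integral>\<^sup>+x. ennreal (f x) \<partial>M) + (\<integral>\<^sup>+x. ennreal (g x) \<partial>M)"
  by (simp add: nn_integral_add[symmetric] nn_integral_mono ennreal_add_le)

lemma ext_integral_add:
  assumes [measurable]: "f \<in> borel_measurable M" "g \<in> borel_measurable M"
    and "(\<integral>\<^sup>+x. ennreal (f x) \<partial>M) \<noteq> \<infinity>" "(\<integral>\<^sup>+x. ennreal (g x) \<partial>M) \<noteq> \<infinity>"
  shows "ext_integral M (\<lambda>x. f x + g x) = ext_integral M f + ext_integral M g"
proof -
  have "(\<integral>\<^sup>+x. ennreal (f x + g x) \<partial>M) \<noteq> \<infinity>"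
    using nn_integral_ennreal_add_le[OF assms(1,2)] assms(3,4) by (auto simp: top_unique)
  moreover have "(\<integral>\<^sup>+x. ennreal (f x + g x) \<partial>M)
        + ((\<integral>\<^sup>+x. ennreal (- f x) \<partial>M) + (\<integral>\<^sup>+x. ennreal (- g x) \<partial>M))
      = ((\<integral>\<^sup>+x. ennreal (f x) \<partial>M) + (\<integral>\<^sup>+x. ennreal (g x) \<partial>M))
        + (\<integral>\<^sup>+x. ennreal (- (f x + g x)) \<partial>M)"
    using ennreal_pos_neg_add
    by (simp add: nn_integral_add[symmetric] add.commute del: minus_add_distrib)
  ultimately have "ext_integral M (\<lambda>x. f x + g x)
      = enn2ereal ((\<integral>\<^sup>+x. ennreal (f x) \<partial>M) + (\<integral>\<^sup>+x. ennreal (g x) \<partial>M))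
        - enn2ereal ((\<integral>\<^sup>+x. ennreal (- f x) \<partial>M) + (\<integral>\<^sup>+x. ennreal (- g x) \<partial>M))"
    unfolding ext_integral_def using assms(3,4) by (intro enn2ereal_diff_eq) simp_all
  also have "\<dots> = ext_integral M f + ext_integral M g"
    unfolding ext_integral_def using assms(3,4) by (rule enn2ereal_add_diff)
  finally show ?thesis .
qed

lemma ext_integral_cmult:
  assumes [measurable]: "f \<in> borel_measurable M" and "0 \<le> c"
  shows "ext_integral M (\<lambda>x. c * f x) = ereal c * ext_integral M f"
proof -
  have "ennreal (- (c * f x)) = ennreal c * ennreal (- f x)" for x
    using ennreal_mult'[OF \<open>0 \<le> c\<close>, of "- f x"] by simp
  then have "(\<integral>\<^sup>+x. ennreal (c * f x) \<partial>M) = ennreal c * (\<integral>\<^sup>+x. ennreal (f x) \<partial>M)"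
       "(\<integral>\<^sup>+x. ennreal (- (c * f x)) \<partial>M) = ennreal c * (\<integral>\<^sup>+x. ennreal (- f x) \<partial>M)"
    using \<open>0 \<le> c\<close> by (simp_all add: nn_integral_cmult[symmetric] ennreal_mult')
  then show ?thesis
    unfolding ext_integral_def using \<open>0 \<le> c\<close> by (simp add: enn2ereal_cmult_diff)
qed

lemma nn_integral_ennreal_sum_ne_top:
  assumes "finite I" and "\<And>i. i \<in> I \<Longrightarrow> f i \<in> borel_measurable M"
    and "\<And>i. i \<in> I \<Longrightarrow> (\<integral>\<^sup>+x. ennreal (f i x) \<partial>M) \<noteq> \<infinity>"
  shows "(\<integral>\<^sup>+x. ennreal (\<Sum>i\<in>I. f i x) \<partial>M) \<noteq> \<infinity>"
  using assms
proof (induction I rule: finite_induct)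
  case (insert j I)
  have "(\<lambda>x. \<Sum>i\<in>I. f i x) \<in> borel_measurable M"
    using insert.prems by measurable
  from nn_integral_ennreal_add_le[OF _ this, of "f j"] insert show ?case
    by (auto simp: top_unique)
qed simp

lemma ext_integral_sum:
  assumes "finite I" and "\<And>i. i \<in> I \<Longrightarrow> f i \<in> borel_measurable M"
    and "\<And>i. i \<in> I \<Longrightarrow> (\<integral>\<^sup>+x. ennreal (f i x) \<partial>M) \<noteq> \<infinity>"
  shows "ext_integral M (\<lambda>x. \<Sum>i\<in>I. f i x) = (\<Sum>i\<in>I. ext_integral M (f i))"
  using assms
proof (induction I rule: finite_induct)
  case (insert j I)
  have "(\<lambda>x. \<Sum>i\<in>I. f i x) \<in> borel_measurable M"
    using insert.prems by measurable
  then have "ext_integral M (\<lambda>x. f j x + (\<Sum>i\<in>I. f i x))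
      = ext_integral M (f j) + ext_integral M (\<lambda>x. \<Sum>i\<in>I. f i x)"
    using insert nn_integral_ennreal_sum_ne_top[of I f M] by (intro ext_integral_add) auto
  then show ?case
    using insert by simp
qed (simp add: ext_integral_def zero_ennreal.rep_eq)

lemma ext_integral_weighted_sum:
  assumes "finite I" and "\<And>i. i \<in> I \<Longrightarrow> 0 \<le> c i"
    and "\<And>i. i \<in> I \<Longrightarrow> f i \<in> borel_measurable M"
    and "\<And>i. i \<in> I \<Longrightarrow> ext_integral M (f i) < \<infinity>"
  shows "ext_integral M (\<lambda>x. \<Sum>i\<in>I. c i * f i x) = (\<Sum>i\<in>I. ereal (c i) * ext_integral M (f i))"
proof -
  have "ext_integral M (\<lambda>x. c i * f i x) = ereal (c i) * ext_integral M (f i)" if "i \<in> I" for i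
    using assms that by (intro ext_integral_cmult) auto
  moreover have "(\<integral>\<^sup>+x. ennreal (c i * f i x) \<partial>M) \<noteq> \<infinity>" if "i \<in> I" for i
  proof -
    have "ext_integral M (\<lambda>x. c i * f i x) \<noteq> \<infinity>"
      using assms(2,4)[OF that] calculation[OF that] by (cases "ext_integral M (f i)") auto
    then show ?thesis
      using ext_integral_eq_top_iff by blast
  qed
  ultimately show ?thesis
    using assms by (subst ext_integral_sum) auto
qed

lemma nn_integral_lborel_dilate:
  assumes [measurable]: "h \<in> borel_measurable borel" and "0 < t"
  shows "(\<integral>\<^sup>+x. h (x / t) \<partial>lborel) = ennreal t * (\<integral>\<^sup>+x. h x \<partial>lborel)"
  using nn_integral_real_affine[of "\<lambda>x. h (x / t)" t 0] \<open>0 < t\<close> by simp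

lemma ext_integral_lborel_dilate:
  assumes [measurable]: "f \<in> borel_measurable borel" and "0 < t"
  shows "ext_integral lborel (\<lambda>x. f (x / t)) = ereal t * ext_integral lborel f"
proof -
  have "(\<integral>\<^sup>+x. ennreal (f (x / t)) \<partial>lborel) = ennreal t * (\<integral>\<^sup>+x. ennreal (f x) \<partial>lborel)"
    using \<open>0 < t\<close> by (intro nn_integral_lborel_dilate) simp_all
  moreover have "(\<integral>\<^sup>+x. ennreal (- f (x / t)) \<partial>lborel) = ennreal t * (\<integral>\<^sup>+x. ennreal (- f x) \<partial>lborel)"
    using \<open>0 < t\<close> by (intro nn_integral_lborel_dilate) simp_all
  ultimately show ?thesis
    unfolding ext_integral_def using \<open>0 < t\<close> by (simp add: enn2ereal_cmult_diff)
qed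

section \<open>Entropy of densities and their dilations\<close>

definition density_entropy :: "(real \<Rightarrow> real) \<Rightarrow> ereal" where
  "density_entropy r = ext_integral lborel (\<lambda>x. r x * ln (r x))"

lemma entropy_H_eq_density_entropy:
  "entropy_H M = density_entropy (\<lambda>x. enn2real (RN_deriv lborel M x))"
  unfolding entropy_H_def density_entropy_def ext_integral_def Let_def ..

lemma entropy_H_density:
  assumes "h \<in> borel_measurable borel"
  shows "entropy_H (density lborel h) = density_entropy (\<lambda>x. enn2real (h x))"
proof -
  have "AE x in lborel. h x = RN_deriv lborel (density lborel h) x"
    using assms by (intro sigma_finite_measure.RN_deriv_unique[OF lborel.sigma_finite_measure_axioms]) simp_all
  then show ?thesis
    unfolding entropy_H_eq_density_entropy density_entropy_def
    by (intro ext_integral_cong_AE) (auto elim!: eventually_mono)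
qed

lemma density_RN_deriv_real:
  assumes "sigma_finite_measure \<nu>" and "sets \<nu> = sets borel" and "absolutely_continuous lborel \<nu>"
  shows "\<nu> = density lborel (\<lambda>x. ennreal (enn2real (RN_deriv lborel \<nu> x)))"
proof -
  have "AE x in lborel. RN_deriv lborel \<nu> x \<noteq> \<infinity>"
    using sigma_finite_measure.RN_deriv_finite[OF lborel.sigma_finite_measure_axioms assms(1,3)] assms(2)
    by simp
  then have "density lborel (RN_deriv lborel \<nu>) = density lborel (\<lambda>x. ennreal (enn2real (RN_deriv lborel \<nu> x)))"
    by (intro density_cong) (auto elim!: eventually_mono simp: ennreal_enn2real_if)
  moreover have "density lborel (RN_deriv lborel \<nu>) = \<nu>"
    using sigma_finite_measure.density_RN_deriv[OF lborel.sigma_finite_measure_axioms assms(3)] assms(2)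
    by simp
  ultimately show ?thesis by simp
qed

lemma prob_density_finite_entropy:
  assumes "prob_space \<nu>" and "sets \<nu> = sets borel" and "absolutely_continuous lborel \<nu>"
    and "entropy_H \<nu> < \<infinity>"
  obtains g where "g \<in> borel_measurable borel" "\<And>x. 0 \<le> g x"
    "\<nu> = density lborel (\<lambda>x. ennreal (g x))" "(\<integral>\<^sup>+x. ennreal (g x) \<partial>lborel) = 1"
    "density_entropy g < \<infinity>"
proof
  define g where "g x = enn2real (RN_deriv lborel \<nu> x)" for x
  have "RN_deriv lborel \<nu> \<in> borel_measurable borel"
    using borel_measurable_RN_deriv[of lborel \<nu>] by simp
  then show [measurable]: "g \<in> borel_measurable borel"
    unfolding g_def by measurable
  show "0 \<le> g x" for x
    by (simp add: g_def)
  show nu: "\<nu> = density lborel (\<lambda>x. ennreal (g x))"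
    unfolding g_def using assms by (intro density_RN_deriv_real) (simp_all add: prob_space_imp_sigma_finite)
  have "emeasure \<nu> UNIV = 1"
    using prob_space.emeasure_space_1[OF assms(1)] sets_eq_imp_space_eq[OF assms(2)] by simp
  then show "(\<integral>\<^sup>+x. ennreal (g x) \<partial>lborel) = 1"
    by (subst (asm) nu) (simp add: emeasure_density)
  show "density_entropy g < \<infinity>"
    using assms(4) by (simp add: entropy_H_eq_density_entropy g_def[abs_def])
qed

lemma dilate_density_real:
  assumes [measurable]: "g \<in> borel_measurable borel" and "\<And>x. 0 \<le> g x" and "0 < t"
  shows "dilate t (density lborel (\<lambda>x. ennreal (g x))) = density lborel (\<lambda>x. ennreal (g (x / t) / t))"
proof -
  have "density lborel (\<lambda>x. ennreal (g x)) = density lborel (\<lambda>x. ennreal (g (t * x / t)))"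
    using \<open>0 < t\<close> by simp
  then have "dilate t (density lborel (\<lambda>x. ennreal (g x)))
      = density (distr lborel borel ((*) t)) (\<lambda>y. ennreal (g (y / t)))"
    unfolding dilate_def by (simp add: density_distr)
  also have "\<dots> = density lborel (\<lambda>y. ennreal (inverse t) * ennreal (g (y / t)))"
    using \<open>0 < t\<close> by (simp add: lborel_distr_mult density_density_eq)
  also have "\<dots> = density lborel (\<lambda>x. ennreal (g (x / t) / t))"
    using assms by (simp add: ennreal_mult'[symmetric] divide_inverse mult.commute)
  finally show ?thesis .
qed

lemma nn_integral_dilate_density:
  assumes [measurable]: "g \<in> borel_measurable borel" and "\<And>x. 0 \<le> g x" and "0 < t"
  shows "(\<integral>\<^sup>+x. ennreal (g (x / t) / t) \<partial>lborel) = (\<integral>\<^sup>+x. ennreal (g x) \<partial>lborel)"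
proof -
  have "(\<integral>\<^sup>+x. ennreal (g (x / t) / t) \<partial>lborel) = ennreal t * (\<integral>\<^sup>+y. ennreal (g y / t) \<partial>lborel)"
    using \<open>0 < t\<close> by (intro nn_integral_lborel_dilate) simp_all
  also have "\<dots> = (\<integral>\<^sup>+y. ennreal (g y) \<partial>lborel)"
    using assms by (simp add: nn_integral_cmult[symmetric] ennreal_mult[symmetric])
  finally show ?thesis .
qed

lemma density_entropy_dilate:
  assumes [measurable]: "g \<in> borel_measurable borel" and g: "\<And>x. 0 \<le> g x"
    and mass: "(\<integral>\<^sup>+x. ennreal (g x) \<partial>lborel) = 1" and "density_entropy g < \<infinity>" and "0 < t"
  shows "density_entropy (\<lambda>x. g (x / t) / t) = density_entropy g - ereal (ln t)"
proof -
  have "integrable lborel g" "integral\<^sup>L lborel g = 1"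
    using nn_integral_eq_integrable[of g lborel 1] mass g by simp_all
  then have int: "integrable lborel (\<lambda>y. - ln t * g y)" "integral\<^sup>L lborel (\<lambda>y. - ln t * g y) = - ln t"
    by simp_all
  have scaled: "t * (g y / t * ln (g y / t)) = g y * ln (g y) + - ln t * g y" for y
    using g[of y] \<open>0 < t\<close> by (cases "g y = 0") (simp_all add: ln_div algebra_simps)
  have "density_entropy (\<lambda>x. g (x / t) / t) = ereal t * ext_integral lborel (\<lambda>y. g y / t * ln (g y / t))"
    unfolding density_entropy_def using \<open>0 < t\<close> by (intro ext_integral_lborel_dilate) simp_all
  also have "\<dots> = ext_integral lborel (\<lambda>y. t * (g y / t * ln (g y / t)))"
    using \<open>0 < t\<close> by (intro ext_integral_cmult[symmetric]) simp_all
  also have "\<dots> = ext_integral lborel (\<lambda>y. g y * ln (g y) + - ln t * g y)"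
    by (simp only: scaled)
  also have "\<dots> = density_entropy g + ext_integral lborel (\<lambda>y. - ln t * g y)"
    unfolding density_entropy_def
  proof (rule ext_integral_add)
    show "(\<integral>\<^sup>+x. ennreal (g x * ln (g x)) \<partial>lborel) \<noteq> \<infinity>"
      using \<open>density_entropy g < \<infinity>\<close> by (simp add: density_entropy_def ext_integral_eq_top_iff)
    show "(\<integral>\<^sup>+x. ennreal (- ln t * g x) \<partial>lborel) \<noteq> \<infinity>"
      using int(1) unfolding real_integrable_def by blast
  qed simp_all
  also have "\<dots> = density_entropy g - ereal (ln t)"
    unfolding ext_integral_eq_integral[OF int(1)] int(2) by (simp add: minus_ereal_def)
  finally show ?thesis .
qed

section \<open>Entropy of mixtures\<close>

lemma xlnx_ge_tangent:
  fixes u v :: real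
  assumes "0 \<le> u" "0 < v"
  shows "v * ln v + (1 + ln v) * (u - v) \<le> u * ln u"
proof (cases "u = 0")
  case False
  with assms have "0 < u" by simp
  have "ln (v / u) \<le> v / u - 1"
    using \<open>0 < u\<close> \<open>0 < v\<close> by (intro ln_le_minus_one) simp
  then have "u * (ln v - ln u) \<le> v - u"
    using \<open>0 < u\<close> \<open>0 < v\<close> by (simp add: ln_div field_simps)
  then show ?thesis by (simp add: algebra_simps)
qed (use assms in \<open>simp add: algebra_simps\<close>)

lemma xlnx_weighted_sum_le:
  fixes a p :: "'i \<Rightarrow> real"
  assumes "finite I" and a: "\<And>i. i \<in> I \<Longrightarrow> 0 \<le> a i" and "(\<Sum>i\<in>I. a i) = 1"
    and p: "\<And>i. i \<in> I \<Longrightarrow> 0 \<le> p i"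
  defines "q \<equiv> \<Sum>i\<in>I. a i * p i"
  shows "q * ln q \<le> (\<Sum>i\<in>I. a i * (p i * ln (p i)))"
proof (cases "q = 0")
  case True
  then have "\<forall>i\<in>I. a i * p i = 0"
    unfolding q_def using assms by (subst sum_nonneg_eq_0_iff[symmetric]) auto
  then have "(\<Sum>i\<in>I. a i * (p i * ln (p i))) = 0"
    by (intro sum.neutral) auto
  then show ?thesis
    using True by simp
next
  case False
  then have "0 < q"
    unfolding q_def using a p by (simp add: less_le sum_nonneg)
  have "(\<Sum>i\<in>I. a i * (q * ln q + (1 + ln q) * (p i - q))) \<le> (\<Sum>i\<in>I. a i * (p i * ln (p i)))"
    using a p \<open>0 < q\<close> by (intro sum_mono mult_left_mono xlnx_ge_tangent) auto
  moreover have "(\<Sum>i\<in>I. a i * (q * ln q + (1 + ln q) * (p i - q)))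
      = (q * ln q - (1 + ln q) * q) * (\<Sum>i\<in>I. a i) + (1 + ln q) * (\<Sum>i\<in>I. a i * p i)"
    by (simp add: algebra_simps sum.distrib sum_distrib_left sum_subtractf sum_negf)
  ultimately show ?thesis
    using \<open>(\<Sum>i\<in>I. a i) = 1\<close> by (simp add: q_def[symmetric] algebra_simps)
qed

lemma xlnx_weighted_sum_ge:
  fixes a p :: "'i \<Rightarrow> real"
  assumes "finite I" and a: "\<And>i. i \<in> I \<Longrightarrow> 0 < a i" and p: "\<And>i. i \<in> I \<Longrightarrow> 0 \<le> p i"
  defines "q \<equiv> \<Sum>i\<in>I. a i * p i"
  shows "(\<Sum>i\<in>I. a i * (p i * ln (p i))) \<le> q * ln q + (\<Sum>i\<in>I. - (a i * ln (a i)) * p i)"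
proof -
  have "a i * (p i * ln (p i)) \<le> a i * p i * ln q + - (a i * ln (a i)) * p i" if "i \<in> I" for i
  proof (cases "p i = 0")
    case False
    with a p that have "0 < a i * p i" by (simp add: less_le)
    moreover have "a i * p i \<le> q"
      unfolding q_def using assms that by (intro member_le_sum mult_nonneg_nonneg) (auto intro: less_imp_le)
    ultimately have "a i * p i * ln (a i * p i) \<le> a i * p i * ln q"
      by (intro mult_left_mono) auto
    moreover have "a i * p i * ln (a i * p i) = a i * (p i * ln (p i)) + a i * ln (a i) * p i"
      using \<open>0 < a i * p i\<close> a[OF that] by (simp add: ln_mult zero_less_mult_iff algebra_simps)
    ultimately show ?thesis
      by simp
  qed simp
  then have "(\<Sum>i\<in>I. a i * (p i * ln (p i))) \<le> (\<Sum>i\<in>I. a i * p i * ln q + - (a i * ln (a i)) * p i)"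
    by (rule sum_mono)
  also have "\<dots> = q * ln q + (\<Sum>i\<in>I. - (a i * ln (a i)) * p i)"
    unfolding sum.distrib q_def sum_distrib_right ..
  finally show ?thesis .
qed

lemma weights_entropy_nonneg:
  fixes a :: "'i \<Rightarrow> real"
  assumes "finite I" and "\<And>i. i \<in> I \<Longrightarrow> 0 < a i" and "(\<Sum>i\<in>I. a i) = 1"
  shows "0 \<le> - (\<Sum>i\<in>I. a i * ln (a i))"
proof -
  have "a i * ln (a i) \<le> 0" if "i \<in> I" for i
  proof -
    have "a i \<le> 1"
      using member_le_sum[OF that, of a] assms by (simp add: less_imp_le)
    then show ?thesis
      using assms(2)[OF that] by (simp add: mult_nonneg_nonpos)
  qed
  then show ?thesis
    by (simp add: sum_nonpos)
qed

lemma density_entropy_mixture_le: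
  fixes a :: "'i \<Rightarrow> real" and p :: "'i \<Rightarrow> real \<Rightarrow> real"
  assumes "finite I" and a: "\<And>i. i \<in> I \<Longrightarrow> 0 \<le> a i" and "(\<Sum>i\<in>I. a i) = 1"
    and p: "\<And>i. i \<in> I \<Longrightarrow> p i \<in> borel_measurable borel" "\<And>i x. i \<in> I \<Longrightarrow> 0 \<le> p i x"
    and "\<And>i. i \<in> I \<Longrightarrow> density_entropy (p i) < \<infinity>"
    and "q \<in> borel_measurable borel" and q: "AE x in lborel. q x = (\<Sum>i\<in>I. a i * p i x)"
  shows "density_entropy q \<le> (\<Sum>i\<in>I. ereal (a i) * density_entropy (p i))"
proof -
  have [measurable]: "(\<lambda>x. p i x * ln (p i x)) \<in> borel_measurable borel" if "i \<in> I" for i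
    using p(1)[OF that] by measurable
  have "density_entropy q \<le> ext_integral lborel (\<lambda>x. \<Sum>i\<in>I. a i * (p i x * ln (p i x)))"
    unfolding density_entropy_def
  proof (rule ext_integral_mono_AE)
    show "AE x in lborel. q x * ln (q x) \<le> (\<Sum>i\<in>I. a i * (p i x * ln (p i x)))"
      using q by eventually_elim (use assms in \<open>simp add: xlnx_weighted_sum_le\<close>)
  qed (use assms in measurable)
  also have "\<dots> = (\<Sum>i\<in>I. ereal (a i) * density_entropy (p i))"
    unfolding density_entropy_def using assms by (intro ext_integral_weighted_sum) (auto simp: density_entropy_def)
  finally show ?thesis .
qed

lemma nn_integral_weighted_sum_le:
  assumes "finite I" and c: "\<And>i. i \<in> I \<Longrightarrow> 0 \<le> c i"
    and p: "\<And>i. i \<in> I \<Longrightarrow> p i \<in> borel_measurable M" "\<And>i x. i \<in> I \<Longrightarrow> 0 \<le> p i x"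
    and p_mass: "\<And>i. i \<in> I \<Longrightarrow> (\<integral>\<^sup>+x. ennreal (p i x) \<partial>M) \<le> 1"
  shows "(\<integral>\<^sup>+x. ennreal (\<Sum>i\<in>I. c i * p i x) \<partial>M) \<le> ennreal (\<Sum>i\<in>I. c i)"
proof -
  have "ennreal (\<Sum>i\<in>I. c i * p i x) = (\<Sum>i\<in>I. ennreal (c i) * ennreal (p i x))" for x
    using c p by (simp add: ennreal_mult sum_nonneg flip: sum_ennreal)
  then have "(\<integral>\<^sup>+x. ennreal (\<Sum>i\<in>I. c i * p i x) \<partial>M)
      = (\<Sum>i\<in>I. ennreal (c i) * (\<integral>\<^sup>+x. ennreal (p i x) \<partial>M))"
    using c p by (simp add: nn_integral_sum nn_integral_cmult)
  also have "\<dots> \<le> (\<Sum>i\<in>I. ennreal (c i))"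
    using p_mass by (intro sum_mono) (auto intro: mult_left_le)
  finally show ?thesis
    using c by simp
qed

lemma density_entropy_mixture_ge:
  fixes a :: "'i \<Rightarrow> real" and p :: "'i \<Rightarrow> real \<Rightarrow> real"
  assumes "finite I" and a: "\<And>i. i \<in> I \<Longrightarrow> 0 < a i" "\<And>i. i \<in> I \<Longrightarrow> a i \<le> 1"
    and p: "\<And>i. i \<in> I \<Longrightarrow> p i \<in> borel_measurable borel" "\<And>i x. i \<in> I \<Longrightarrow> 0 \<le> p i x"
    and "\<And>i. i \<in> I \<Longrightarrow> (\<integral>\<^sup>+x. ennreal (p i x) \<partial>lborel) \<le> 1"
    and "\<And>i. i \<in> I \<Longrightarrow> density_entropy (p i) < \<infinity>"
    and [measurable]: "q \<in> borel_measurable borel" and q: "AE x in lborel. q x = (\<Sum>i\<in>I. a i * p i x)"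
  shows "(\<Sum>i\<in>I. ereal (a i) * density_entropy (p i))
    \<le> density_entropy q + ereal (- (\<Sum>i\<in>I. a i * ln (a i)))"
proof (cases "density_entropy q = \<infinity>")
  case False
  define c where "c i = - (a i * ln (a i))" for i
  have c: "0 \<le> c i" if "i \<in> I" for i
    using a[OF that] by (simp add: c_def mult_nonneg_nonpos)
  define b where "b x = (\<Sum>i\<in>I. c i * p i x)" for x
  have [measurable]: "b \<in> borel_measurable borel"
    unfolding b_def using p by measurable
  have [measurable]: "(\<lambda>x. p i x * ln (p i x)) \<in> borel_measurable borel" if "i \<in> I" for i
    using p(1)[OF that] by measurable
  have b_mass: "(\<integral>\<^sup>+x. ennreal (b x) \<partial>lborel) \<le> ennreal (\<Sum>i\<in>I. c i)"
    unfolding b_def using assms c by (intro nn_integral_weighted_sum_le) auto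
  have "(\<Sum>i\<in>I. ereal (a i) * density_entropy (p i))
      = ext_integral lborel (\<lambda>x. \<Sum>i\<in>I. a i * (p i x * ln (p i x)))"
    unfolding density_entropy_def using assms
    by (intro ext_integral_weighted_sum[symmetric]) (auto simp: density_entropy_def less_imp_le)
  also have "\<dots> \<le> ext_integral lborel (\<lambda>x. q x * ln (q x) + b x)"
  proof (rule ext_integral_mono_AE)
    show "AE x in lborel. (\<Sum>i\<in>I. a i * (p i x * ln (p i x))) \<le> q x * ln (q x) + b x"
      using q
    proof eventually_elim
      case (elim x)
      then show ?case
        using xlnx_weighted_sum_ge[of I a "\<lambda>i. p i x"] assms by (simp add: b_def c_def)
    qed
  qed (use assms in measurable)
  also have "\<dots> = density_entropy q + ext_integral lborel b"
    unfolding density_entropy_def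
  proof (rule ext_integral_add)
    show "(\<integral>\<^sup>+x. ennreal (q x * ln (q x)) \<partial>lborel) \<noteq> \<infinity>"
      using False unfolding density_entropy_def by (simp add: ext_integral_eq_top_iff)
    show "(\<integral>\<^sup>+x. ennreal (b x) \<partial>lborel) \<noteq> \<infinity>"
      using b_mass by (auto simp: top_unique)
  qed simp_all
  also have "\<dots> \<le> density_entropy q + ereal (\<Sum>i\<in>I. c i)"
  proof (intro add_left_mono)
    have "ext_integral lborel b = enn2ereal (\<integral>\<^sup>+x. ennreal (b x) \<partial>lborel)"
      using c p by (intro ext_integral_nonneg_eq) (simp add: b_def sum_nonneg)
    then show "ext_integral lborel b \<le> ereal (\<Sum>i\<in>I. c i)"
      using b_mass c by (simp add: less_eq_ennreal.rep_eq sum_nonneg)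
  qed
  finally show ?thesis
    by (simp add: c_def sum_negf)
qed simp

section \<open>Sums of measures and convolution with a density\<close>

lemma sum_meas_sets[simp]: "sets (sum_meas M I) = sets borel"
  unfolding sum_meas_def using sets.sigma_sets_eq[of borel] by (simp add: sets_measure_of_conv)

lemma sum_meas_space[simp]: "space (sum_meas M I) = UNIV"
  unfolding sum_meas_def by (simp add: space_measure_of_conv)

lemma emeasure_sum_meas:
  assumes Ms: "\<And>i. i \<in> I \<Longrightarrow> sets (M i) = sets borel" and A: "A \<in> sets borel"
  shows "emeasure (sum_meas M I) A = (\<Sum>i\<in>I. emeasure (M i) A)"
  unfolding sum_meas_def
proof (rule emeasure_measure_of_sigma[OF _ _ _ A])
  show "sigma_algebra UNIV (sets borel)"
    using sets.sigma_algebra_axioms[of borel] by simp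
  show "positive (sets borel) (\<lambda>A. \<Sum>i\<in>I. emeasure (M i) A)"
    unfolding positive_def by simp
  show "countably_additive (sets borel) (\<lambda>A. \<Sum>i\<in>I. emeasure (M i) A)"
    unfolding countably_additive_def
  proof (intro allI impI)
    fix F :: "nat \<Rightarrow> real set"
    assume F: "range F \<subseteq> sets borel" "disjoint_family F" "\<Union> (range F) \<in> sets borel"
    have "(\<Sum>n. \<Sum>i\<in>I. emeasure (M i) (F n)) = (\<Sum>i\<in>I. \<Sum>n. emeasure (M i) (F n))"
      by (rule suminf_sum[OF summableI])
    also have "\<dots> = (\<Sum>i\<in>I. emeasure (M i) (\<Union> (range F)))"
      using F Ms by (intro sum.cong refl suminf_emeasure) auto
    finally show "(\<Sum>n. \<Sum>i\<in>I. emeasure (M i) (F n)) = (\<Sum>i\<in>I. emeasure (M i) (\<Union> (range F)))" .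
  qed
qed

lemma prob_space_sum_meas:
  assumes "\<And>i. i \<in> I \<Longrightarrow> sets (M i) = sets borel"
    and "\<And>i. i \<in> I \<Longrightarrow> emeasure (M i) UNIV = ennreal (a i)" and "\<And>i. i \<in> I \<Longrightarrow> 0 \<le> a i"
    and "(\<Sum>i\<in>I. a i) = 1"
  shows "prob_space (sum_meas M I)"
  using assms by (intro prob_spaceI) (simp add: emeasure_sum_meas)

lemma nn_integral_sum_meas:
  assumes I: "finite I" and Ms: "\<And>i. i \<in> I \<Longrightarrow> sets (M i) = sets borel"
    and f: "f \<in> borel_measurable borel"
  shows "(\<integral>\<^sup>+x. f x \<partial>sum_meas M I) = (\<Sum>i\<in>I. \<integral>\<^sup>+x. f x \<partial>M i)"
proof -
  have sp: "space (M i) = UNIV" if "i \<in> I" for i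
    using sets_eq_imp_space_eq[OF Ms[OF that]] by simp
  have mi: "g \<in> borel_measurable (M i)" if "i \<in> I" "g \<in> borel_measurable (sum_meas M I)" for i g
  proof -
    have "borel_measurable (M i) = borel_measurable (sum_meas M I)"
      by (rule measurable_cong_sets) (simp_all add: Ms that)
    with that(2) show ?thesis by blast
  qed
  from f have "f \<in> borel_measurable (sum_meas M I)"
    using measurable_cong_sets[of "sum_meas M I" borel borel borel] by force
  then show ?thesis
  proof induction
    case (cong f g)
    have "f = g" using cong.hyps(3) by auto
    then show ?case using cong.prems cong.IH cong.hyps by simp
  next
    case (set A)
    then show ?case using I Ms sp by (simp add: emeasure_sum_meas)
  next
    case (mult f c)
    have "(\<Sum>i\<in>I. \<integral>\<^sup>+x. c * f x \<partial>M i) = (\<Sum>i\<in>I. c * \<integral>\<^sup>+x. f x \<partial>M i)"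
      by (intro sum.cong refl nn_integral_cmult mi mult.hyps)
    then show ?case using mult by (simp add: nn_integral_cmult sum_distrib_left)
  next
    case (add f g)
    have "(\<Sum>i\<in>I. \<integral>\<^sup>+x. g x + f x \<partial>M i) = (\<Sum>i\<in>I. (\<integral>\<^sup>+x. g x \<partial>M i) + \<integral>\<^sup>+x. f x \<partial>M i)"
      by (intro sum.cong refl nn_integral_add mi add.hyps)
    then show ?case using add by (simp add: nn_integral_add sum.distrib)
  next
    case (seq U)
    have "(\<integral>\<^sup>+x. (SUP i. U i x) \<partial>sum_meas M I) = (SUP n. \<integral>\<^sup>+x. U n x \<partial>sum_meas M I)"
      using seq by (intro nn_integral_monotone_convergence_SUP) auto
    also have "\<dots> = (SUP n. \<Sum>i\<in>I. \<integral>\<^sup>+x. U n x \<partial>M i)" using seq by simp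
    also have "\<dots> = (\<Sum>i\<in>I. SUP n. \<integral>\<^sup>+x. U n x \<partial>M i)"
      using seq mi by (intro ennreal_SUP_sum) (auto simp: incseq_def le_fun_def intro!: nn_integral_mono)
    also have "\<dots> = (\<Sum>i\<in>I. \<integral>\<^sup>+x. (SUP n. U n x) \<partial>M i)"
      using seq by (intro sum.cong refl nn_integral_monotone_convergence_SUP[symmetric]) (auto intro: mi)
    finally show ?case by (simp add: image_comp)
  qed
qed

definition conv_density :: "real measure \<Rightarrow> (real \<Rightarrow> real) \<Rightarrow> real \<Rightarrow> real" where
  "conv_density M f z = enn2real (\<integral>\<^sup>+x. ennreal (f (z - x)) \<partial>M)"

lemma conv_density_nonneg: "0 \<le> conv_density M f z"
  by (simp add: conv_density_def)

lemma borel_measurable_conv_density: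
  assumes "finite_measure M" and [measurable_cong]: "sets M = sets borel"
    and [measurable]: "f \<in> borel_measurable borel"
  shows "conv_density M f \<in> borel_measurable borel"
proof -
  interpret finite_measure M by fact
  show ?thesis
    unfolding conv_density_def by measurable
qed

lemma nn_integral_lborel_translate:
  fixes h :: "real \<Rightarrow> ennreal"
  assumes "h \<in> borel_measurable borel"
  shows "(\<integral>\<^sup>+z. h (z - x) \<partial>lborel) = (\<integral>\<^sup>+z. h z \<partial>lborel)"
  using nn_integral_real_affine[OF assms, of 1 "- x"] by simp

lemma nn_integral_lborel_convolution:
  fixes h :: "real \<Rightarrow> ennreal"
  assumes "finite_measure M" and [measurable_cong]: "sets M = sets borel"
    and [measurable]: "h \<in> borel_measurable borel"
  shows "(\<integral>\<^sup>+z. \<integral>\<^sup>+x. h (z - x) \<partial>M \<partial>lborel) = emeasure M (space M) * (\<integral>\<^sup>+z. h z \<partial>lborel)"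
proof -
  interpret M: finite_measure M by fact
  interpret pair_sigma_finite M lborel
    by (simp add: M.sigma_finite_measure_axioms lborel.sigma_finite_measure_axioms pair_sigma_finite_def)
  have "(\<integral>\<^sup>+z. \<integral>\<^sup>+x. h (z - x) \<partial>M \<partial>lborel) = (\<integral>\<^sup>+x. \<integral>\<^sup>+z. h (z - x) \<partial>lborel \<partial>M)"
    by (rule Fubini') measurable
  also have "\<dots> = (\<integral>\<^sup>+x. (\<integral>\<^sup>+z. h z \<partial>lborel) \<partial>M)"
    by (simp add: nn_integral_lborel_translate)
  finally show ?thesis
    by (simp add: mult.commute)
qed

lemma convolution_measure_density:
  fixes G :: "real \<Rightarrow> ennreal"
  assumes M: "finite_measure M" and [measurable_cong]: "sets M = sets borel"
    and [measurable]: "G \<in> borel_measurable borel" and "finite_measure (density lborel G)"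
  shows "M \<star> density lborel G = density lborel (\<lambda>z. \<integral>\<^sup>+x. G (z - x) \<partial>M)"
proof -
  interpret M: finite_measure M by fact
  interpret pair_sigma_finite M lborel
    by (simp add: M.sigma_finite_measure_axioms lborel.sigma_finite_measure_axioms pair_sigma_finite_def)
  show ?thesis
  proof (rule measure_eqI)
    fix A assume "A \<in> sets (M \<star> density lborel G)"
    then have [measurable]: "A \<in> sets borel"
      by (simp add: convolution_def)
    have "emeasure (M \<star> density lborel G) A = (\<integral>\<^sup>+x. \<integral>\<^sup>+y. G y * indicator A (x + y) \<partial>lborel \<partial>M)"
      using assms by (simp add: convolution_emeasure' nn_integral_density)
    also have "\<dots> = (\<integral>\<^sup>+x. \<integral>\<^sup>+z. G (z - x) * indicator A z \<partial>lborel \<partial>M)"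
    proof (rule nn_integral_cong)
      fix x
      show "(\<integral>\<^sup>+y. G y * indicator A (x + y) \<partial>lborel) = (\<integral>\<^sup>+z. G (z - x) * indicator A z \<partial>lborel)"
        using nn_integral_lborel_translate[of "\<lambda>z. G (z - x) * indicator A z" "- x"]
        by (simp add: add.commute)
    qed
    also have "\<dots> = (\<integral>\<^sup>+z. \<integral>\<^sup>+x. G (z - x) * indicator A z \<partial>M \<partial>lborel)"
      by (rule Fubini'[symmetric]) measurable
    also have "\<dots> = emeasure (density lborel (\<lambda>z. \<integral>\<^sup>+x. G (z - x) \<partial>M)) A"
      by (simp add: emeasure_density nn_integral_multc)
    finally show "emeasure (M \<star> density lborel G) A = emeasure (density lborel (\<lambda>z. \<integral>\<^sup>+x. G (z - x) \<partial>M)) A" .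
  qed (simp add: convolution_def)
qed

lemma AE_convolution_integral_finite:
  fixes h :: "real \<Rightarrow> ennreal"
  assumes "finite_measure M" and [measurable_cong]: "sets M = sets borel"
    and [measurable]: "h \<in> borel_measurable borel" and "(\<integral>\<^sup>+z. h z \<partial>lborel) \<noteq> \<infinity>"
  shows "AE z in lborel. (\<integral>\<^sup>+x. h (z - x) \<partial>M) \<noteq> \<infinity>"
proof (rule nn_integral_PInf_AE)
  interpret finite_measure M by fact
  show "(\<lambda>z. \<integral>\<^sup>+x. h (z - x) \<partial>M) \<in> borel_measurable lborel"
    by measurable
  show "(\<integral>\<^sup>+z. \<integral>\<^sup>+x. h (z - x) \<partial>M \<partial>lborel) \<noteq> \<infinity>"
    using assms by (simp add: nn_integral_lborel_convolution ennreal_mult_eq_top_iff)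
qed

lemma convolution_measure_real_density:
  assumes "finite_measure M" and [measurable_cong]: "sets M = sets borel"
    and [measurable]: "f \<in> borel_measurable borel" and "(\<integral>\<^sup>+x. ennreal (f x) \<partial>lborel) \<noteq> \<infinity>"
  shows "M \<star> density lborel (\<lambda>x. ennreal (f x)) = density lborel (\<lambda>z. ennreal (conv_density M f z))"
proof -
  interpret finite_measure M by fact
  have "finite_measure (density lborel (\<lambda>x. ennreal (f x)))"
    using assms by (intro finite_measureI) (simp add: emeasure_density)
  then have "M \<star> density lborel (\<lambda>x. ennreal (f x))
      = density lborel (\<lambda>z. \<integral>\<^sup>+x. ennreal (f (z - x)) \<partial>M)"
    using assms by (intro convolution_measure_density) simp_all
  also have "\<dots> = density lborel (\<lambda>z. ennreal (conv_density M f z))"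
    using AE_convolution_integral_finite[of M "\<lambda>x. ennreal (f x)"] assms
    by (intro density_cong) (auto simp: conv_density_def ennreal_enn2real_if elim!: eventually_mono)
  finally show ?thesis .
qed

lemma entropy_H_convolution_density:
  assumes "finite_measure M" and "sets M = sets borel"
    and "f \<in> borel_measurable borel" and "(\<integral>\<^sup>+x. ennreal (f x) \<partial>lborel) \<noteq> \<infinity>"
  shows "entropy_H (M \<star> density lborel (\<lambda>x. ennreal (f x))) = density_entropy (conv_density M f)"
  using assms borel_measurable_conv_density[OF assms(1-3)]
  by (simp add: convolution_measure_real_density entropy_H_density conv_density_nonneg)

lemma nn_integral_conv_density_le:
  assumes "prob_space M" and [measurable_cong]: "sets M = sets borel"
    and [measurable]: "f \<in> borel_measurable borel"
  shows "(\<integral>\<^sup>+z. ennreal (conv_density M f z) \<partial>lborel) \<le> (\<integral>\<^sup>+x. ennreal (f x) \<partial>lborel)"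
proof -
  interpret prob_space M by fact
  have "(\<integral>\<^sup>+z. ennreal (conv_density M f z) \<partial>lborel) \<le> (\<integral>\<^sup>+z. \<integral>\<^sup>+x. ennreal (f (z - x)) \<partial>M \<partial>lborel)"
    unfolding conv_density_def by (intro nn_integral_mono) (simp add: ennreal_enn2real_if)
  also have "\<dots> = (\<integral>\<^sup>+x. ennreal (f x) \<partial>lborel)"
    using nn_integral_lborel_convolution[OF finite_measure_axioms assms(2), of "\<lambda>x. ennreal (f x)"]
    by (simp add: emeasure_space_1)
  finally show ?thesis .
qed

text \<open>Jensen's inequality for the convex function \<open>u \<mapsto> max 0 (u ln u)\<close> (the integral of
  \<^typ>\<open>ennreal\<close> values only sees the positive part), via its supporting line at \<open>v\<close>.\<close>
lemma jensen_pos_xlnx: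
  assumes "prob_space M" and [measurable]: "X \<in> borel_measurable M"
    and X: "\<And>y. 0 \<le> X y" and v: "(\<integral>\<^sup>+y. ennreal (X y) \<partial>M) = ennreal v" "0 \<le> v"
  shows "ennreal (v * ln v) \<le> (\<integral>\<^sup>+y. ennreal (X y * ln (X y)) \<partial>M)"
proof -
  interpret prob_space M by fact
  define s where "s = (if 1 < v then 1 + ln v else 0)"
  have "0 \<le> s"
    by (simp add: s_def)
  have tangent: "max 0 (v * ln v) + s * u \<le> max 0 (u * ln u) + s * v" if "0 \<le> u" for u
  proof (cases "1 < v")
    case True
    then show ?thesis
      using xlnx_ge_tangent[OF that, of v] by (simp add: s_def algebra_simps)
  next
    case False
    then have "v * ln v \<le> 0"
      using \<open>0 \<le> v\<close> by (cases "v = 0") (auto intro!: mult_nonneg_nonpos)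
    then show ?thesis
      using False that by (simp add: s_def)
  qed
  have "ennreal (max 0 (v * ln v)) + ennreal (s * v)
      = (\<integral>\<^sup>+y. ennreal (max 0 (v * ln v)) + ennreal s * ennreal (X y) \<partial>M)"
    using v \<open>0 \<le> s\<close> by (simp add: nn_integral_add nn_integral_cmult ennreal_mult emeasure_space_1)
  also have "\<dots> = (\<integral>\<^sup>+y. ennreal (max 0 (v * ln v) + s * X y) \<partial>M)"
    using X \<open>0 \<le> s\<close> by (intro nn_integral_cong) (simp add: ennreal_mult)
  also have "\<dots> \<le> (\<integral>\<^sup>+y. ennreal (max 0 (X y * ln (X y)) + s * v) \<partial>M)"
    using tangent X by (intro nn_integral_mono ennreal_leI) simp
  also have "\<dots> = (\<integral>\<^sup>+y. ennreal (X y * ln (X y)) \<partial>M) + ennreal (s * v)"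
    using v \<open>0 \<le> s\<close> by (simp add: nn_integral_add emeasure_space_1)
  finally show ?thesis
    by (simp add: add.commute[of _ "ennreal (s * v)"] ennreal_add_left_cancel_le)
qed

lemma nn_integral_conv_density_xlnx_le:
  assumes "prob_space M" and [measurable_cong]: "sets M = sets borel"
    and [measurable]: "f \<in> borel_measurable borel" and "\<And>x. 0 \<le> f x"
  shows "(\<integral>\<^sup>+z. ennreal (conv_density M f z * ln (conv_density M f z)) \<partial>lborel)
    \<le> (\<integral>\<^sup>+x. ennreal (f x * ln (f x)) \<partial>lborel)"
proof -
  interpret prob_space M by fact
  have "ennreal (conv_density M f z * ln (conv_density M f z))
      \<le> (\<integral>\<^sup>+x. ennreal (f (z - x) * ln (f (z - x))) \<partial>M)" for z
  proof (cases "(\<integral>\<^sup>+x. ennreal (f (z - x)) \<partial>M) = \<infinity>")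
    case False
    then obtain v where "(\<integral>\<^sup>+x. ennreal (f (z - x)) \<partial>M) = ennreal v" "0 \<le> v"
      by (cases "\<integral>\<^sup>+x. ennreal (f (z - x)) \<partial>M" rule: ennreal_cases) auto
    then show ?thesis
      using assms by (simp add: conv_density_def jensen_pos_xlnx)
  qed (simp add: conv_density_def)
  then have "(\<integral>\<^sup>+z. ennreal (conv_density M f z * ln (conv_density M f z)) \<partial>lborel)
      \<le> (\<integral>\<^sup>+z. \<integral>\<^sup>+x. ennreal (f (z - x) * ln (f (z - x))) \<partial>M \<partial>lborel)"
    by (intro nn_integral_mono)
  also have "\<dots> = (\<integral>\<^sup>+x. ennreal (f x * ln (f x)) \<partial>lborel)"
    using nn_integral_lborel_convolution[OF finite_measure_axioms assms(2),
        of "\<lambda>x. ennreal (f x * ln (f x))"]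
    by (simp add: emeasure_space_1)
  finally show ?thesis .
qed

lemma density_entropy_conv_density_less_top:
  assumes "prob_space M" and "sets M = sets borel"
    and "f \<in> borel_measurable borel" and "\<And>x. 0 \<le> f x" and "density_entropy f < \<infinity>"
  shows "density_entropy (conv_density M f) < \<infinity>"
  using nn_integral_conv_density_xlnx_le[OF assms(1-4)] assms(5)
  by (auto simp: density_entropy_def less_top ext_integral_eq_top_iff top_unique)

lemma conv_density_scale_measure:
  assumes "sets M = sets borel" and "f \<in> borel_measurable borel" and "0 \<le> r"
  shows "conv_density (scale_measure (ennreal r) M) f z = r * conv_density M f z"
proof -
  have "(\<lambda>x. ennreal (f (z - x))) \<in> borel_measurable M"
    using assms(1,2) by (simp add: measurable_cong_sets[OF assms(1) refl])
  then show ?thesis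
    unfolding conv_density_def using assms(3) by (simp add: nn_integral_scale_measure enn2real_mult)
qed

lemma prob_space_scale_measure_inverse:
  assumes "emeasure M (space M) = ennreal a" and "0 < a"
  shows "prob_space (scale_measure (ennreal (1 / a)) M)"
  using assms by (intro prob_spaceI) (simp add: space_scale_measure ennreal_mult[symmetric])

lemma AE_conv_density_sum_meas:
  assumes "finite I" and "\<And>i. i \<in> I \<Longrightarrow> sets (M i) = sets borel"
    and "\<And>i. i \<in> I \<Longrightarrow> finite_measure (M i)"
    and [measurable]: "f \<in> borel_measurable borel" and "(\<integral>\<^sup>+x. ennreal (f x) \<partial>lborel) \<noteq> \<infinity>"
  shows "AE z in lborel. conv_density (sum_meas M I) f z = (\<Sum>i\<in>I. conv_density (M i) f z)"
proof -
  have "AE z in lborel. \<forall>i\<in>I. (\<integral>\<^sup>+x. ennreal (f (z - x)) \<partial>M i) \<noteq> \<infinity>"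
    using assms by (intro AE_finite_allI AE_convolution_integral_finite) simp_all
  then show ?thesis
  proof eventually_elim
    case (elim z)
    have "(\<integral>\<^sup>+x. ennreal (f (z - x)) \<partial>sum_meas M I) = (\<Sum>i\<in>I. \<integral>\<^sup>+x. ennreal (f (z - x)) \<partial>M i)"
      using assms by (intro nn_integral_sum_meas) simp_all
    then show ?case
      using elim by (simp add: conv_density_def enn2real_sum less_top)
  qed
qed

lemma conv_density_prob_space:
  assumes "prob_space M" and "sets M = sets borel"
    and "f \<in> borel_measurable borel" and "\<And>x. 0 \<le> f x"
    and "(\<integral>\<^sup>+x. ennreal (f x) \<partial>lborel) = 1" and "density_entropy f < \<infinity>"
  shows "conv_density M f \<in> borel_measurable borel"
    and "(\<integral>\<^sup>+z. ennreal (conv_density M f z) \<partial>lborel) \<le> 1"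
    and "density_entropy (conv_density M f) < \<infinity>"
    and "entropy_H (M \<star> density lborel (\<lambda>x. ennreal (f x))) = density_entropy (conv_density M f)"
proof -
  have "finite_measure M"
    using assms(1) by (simp add: prob_space.finite_measure)
  then show "conv_density M f \<in> borel_measurable borel"
    and "entropy_H (M \<star> density lborel (\<lambda>x. ennreal (f x))) = density_entropy (conv_density M f)"
    using assms by (simp_all add: borel_measurable_conv_density entropy_H_convolution_density)
  show "(\<integral>\<^sup>+z. ennreal (conv_density M f z) \<partial>lborel) \<le> 1"
    using nn_integral_conv_density_le[OF assms(1-3)] assms(5) by simp
  show "density_entropy (conv_density M f) < \<infinity>"
    using assms by (intro density_entropy_conv_density_less_top) simp_all
qed

lemma AE_conv_density_mixture:
  assumes "finite I" and sets_mu: "\<And>i. i \<in> I \<Longrightarrow> sets (\<mu> i) = sets borel"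
    and mass: "\<And>i. i \<in> I \<Longrightarrow> emeasure (\<mu> i) UNIV = ennreal (a i)" and apos: "\<And>i. i \<in> I \<Longrightarrow> 0 < a i"
    and "f \<in> borel_measurable borel" and "(\<integral>\<^sup>+x. ennreal (f x) \<partial>lborel) \<noteq> \<infinity>"
  shows "AE z in lborel. conv_density (sum_meas \<mu> I) f z
    = (\<Sum>i\<in>I. a i * conv_density (scale_measure (ennreal (1 / a i)) (\<mu> i)) f z)"
proof -
  have "finite_measure (\<mu> i)" if "i \<in> I" for i
    using mass[OF that] sets_eq_imp_space_eq[OF sets_mu[OF that]] by (intro finite_measureI) simp
  then have "AE z in lborel. conv_density (sum_meas \<mu> I) f z = (\<Sum>i\<in>I. conv_density (\<mu> i) f z)"
    using assms by (intro AE_conv_density_sum_meas) simp_all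
  moreover have "conv_density (\<mu> i) f z = a i * conv_density (scale_measure (ennreal (1 / a i)) (\<mu> i)) f z"
    if "i \<in> I" for i z
    using apos[OF that] sets_mu[OF that] assms(5) by (simp add: conv_density_scale_measure)
  ultimately show ?thesis
    by (auto elim!: eventually_mono)
qed

lemma entropy_H_mixture_convolution:
  fixes \<mu> :: "nat \<Rightarrow> real measure" and a :: "nat \<Rightarrow> real" and f :: "real \<Rightarrow> real"
  assumes "finite I" and sets_mu: "\<And>i. i \<in> I \<Longrightarrow> sets (\<mu> i) = sets borel"
    and mass: "\<And>i. i \<in> I \<Longrightarrow> emeasure (\<mu> i) UNIV = ennreal (a i)"
    and apos: "\<And>i. i \<in> I \<Longrightarrow> 0 < a i" and asum: "(\<Sum>i\<in>I. a i) = 1"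
    and f: "f \<in> borel_measurable borel" "\<And>x. 0 \<le> f x"
      "(\<integral>\<^sup>+x. ennreal (f x) \<partial>lborel) = 1" "density_entropy f < \<infinity>"
    and \<rho>: "\<rho> = density lborel (\<lambda>x. ennreal (f x))"
  shows "entropy_H (sum_meas \<mu> I \<star> \<rho>)
      \<le> (\<Sum>i\<in>I. ereal (a i) * entropy_H (scale_measure (ennreal (1 / a i)) (\<mu> i) \<star> \<rho>))"
    and "(\<Sum>i\<in>I. ereal (a i) * entropy_H (scale_measure (ennreal (1 / a i)) (\<mu> i) \<star> \<rho>))
      \<le> entropy_H (sum_meas \<mu> I \<star> \<rho>) + ereal (- (\<Sum>i\<in>I. a i * ln (a i)))"
proof -
  define M where "M i = scale_measure (ennreal (1 / a i)) (\<mu> i)" for i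
  define p where "p i = conv_density (M i) f" for i
  define q where "q = conv_density (sum_meas \<mu> I) f"
  have "prob_space (M i)" "sets (M i) = sets borel" if "i \<in> I" for i
    using mass[OF that] apos[OF that] sets_mu[OF that] sets_eq_imp_space_eq[OF sets_mu[OF that]]
    by (simp_all add: M_def prob_space_scale_measure_inverse)
  note p = conv_density_prob_space[OF this f, folded p_def \<rho>]
  have "prob_space (sum_meas \<mu> I)"
    using assms by (intro prob_space_sum_meas) (auto simp: less_imp_le)
  note q = conv_density_prob_space[OF this sum_meas_sets f, folded q_def \<rho>]
  have mixture: "AE z in lborel. q z = (\<Sum>i\<in>I. a i * p i z)"
    unfolding q_def p_def M_def using assms by (intro AE_conv_density_mixture) simp_all
  have "(\<Sum>i\<in>I. ereal (a i) * entropy_H (M i \<star> \<rho>)) = (\<Sum>i\<in>I. ereal (a i) * density_entropy (p i))"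
    using p(4) by simp
  note sum_H = this[unfolded M_def]
  show "entropy_H (sum_meas \<mu> I \<star> \<rho>)
      \<le> (\<Sum>i\<in>I. ereal (a i) * entropy_H (scale_measure (ennreal (1 / a i)) (\<mu> i) \<star> \<rho>))"
    unfolding q(4) sum_H using \<open>finite I\<close> apos asum p(1,3) q(1) mixture
    by (intro density_entropy_mixture_le[where p=p]) (auto simp: less_imp_le p_def conv_density_nonneg)
  have "a i \<le> 1" if "i \<in> I" for i
    using member_le_sum[OF that, of a] apos asum \<open>finite I\<close> by (simp add: less_imp_le)
  then show "(\<Sum>i\<in>I. ereal (a i) * entropy_H (scale_measure (ennreal (1 / a i)) (\<mu> i) \<star> \<rho>))
      \<le> entropy_H (sum_meas \<mu> I \<star> \<rho>) + ereal (- (\<Sum>i\<in>I. a i * ln (a i)))"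
    unfolding q(4) sum_H using \<open>finite I\<close> apos p(1-3) q(1) mixture
    by (intro density_entropy_mixture_ge[where p=p]) (auto simp: p_def conv_density_nonneg)
qed

section \<open>Behaviour as \<open>t \<rightarrow> 0\<close> after division by \<open>|ln t|\<close>\<close>

lemma ereal_divide_le_add:
  fixes R L :: ereal and C d e :: real
  assumes "R \<le> L + ereal C" and "0 < d" and "C \<le> e * d"
  shows "R / ereal d \<le> L / ereal d + ereal e"
proof (cases L)
  case (real l)
  with assms(1) obtain r where "R = ereal r \<or> R = - \<infinity>" "R = ereal r \<longrightarrow> r \<le> l + C"
    by (cases R) auto
  then show ?thesis
    using real assms(2,3) by (auto simp: field_simps)
next
  case MInf
  with assms(1) show ?thesis by simp
qed (use assms(2) in simp)

lemma Liminf_div_abs_ln_eq: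
  fixes L R :: "real \<Rightarrow> ereal" and C :: real
  assumes "0 \<le> C" and LR: "\<And>t. 0 < t \<Longrightarrow> L t \<le> R t" and RL: "\<And>t. 0 < t \<Longrightarrow> R t \<le> L t + ereal C"
  shows "Liminf (at_right 0) (\<lambda>t. L t / ereal \<bar>ln t\<bar>) = Liminf (at_right 0) (\<lambda>t. R t / ereal \<bar>ln t\<bar>)"
proof (rule antisym)
  have "eventually (\<lambda>t. 0 < t \<and> t < 1) (at_right (0::real))"
    unfolding eventually_at_right_field by (intro exI[of _ 1]) auto
  then show "Liminf (at_right 0) (\<lambda>t. L t / ereal \<bar>ln t\<bar>) \<le> Liminf (at_right 0) (\<lambda>t. R t / ereal \<bar>ln t\<bar>)"
    by (intro Liminf_mono) (auto elim!: eventually_mono intro!: ereal_divide_right_mono LR)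
  show "Liminf (at_right 0) (\<lambda>t. R t / ereal \<bar>ln t\<bar>) \<le> Liminf (at_right 0) (\<lambda>t. L t / ereal \<bar>ln t\<bar>)"
  proof (rule ereal_le_epsilon2)
    fix e :: real assume "0 < e"
    define b where "b = exp (- C / e)"
    have "0 < b" "b \<le> 1"
      using \<open>0 \<le> C\<close> \<open>0 < e\<close> by (auto simp: b_def)
    then have "eventually (\<lambda>t. 0 < t \<and> t < b) (at_right (0::real))"
      unfolding eventually_at_right_field by (intro exI[of _ b]) auto
    then have "Liminf (at_right 0) (\<lambda>t. R t / ereal \<bar>ln t\<bar>)
        \<le> Liminf (at_right 0) (\<lambda>t. L t / ereal \<bar>ln t\<bar> + ereal e)"
    proof (intro Liminf_mono, elim eventually_mono)
      fix t :: real assume t: "0 < t \<and> t < b"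
      then have "ln t < - C / e"
        by (metis b_def exp_less_cancel_iff exp_ln)
      then have "C \<le> e * \<bar>ln t\<bar>" and "0 < \<bar>ln t\<bar>"
        using t \<open>b \<le> 1\<close> \<open>0 < e\<close> \<open>0 \<le> C\<close> by (auto simp: field_simps)
      then show "R t / ereal \<bar>ln t\<bar> \<le> L t / ereal \<bar>ln t\<bar> + ereal e"
        using RL t by (intro ereal_divide_le_add) auto
    qed
    also have "\<dots> = Liminf (at_right 0) (\<lambda>t. L t / ereal \<bar>ln t\<bar>) + ereal e"
      by (rule Liminf_add_ereal_right) auto
    finally show "Liminf (at_right 0) (\<lambda>t. R t / ereal \<bar>ln t\<bar>)
        \<le> Liminf (at_right 0) (\<lambda>t. L t / ereal \<bar>ln t\<bar>) + ereal e" .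
  qed
qed

theorem lemma2p2:
  fixes n :: nat and \<mu> :: "nat \<Rightarrow> real measure" and a :: "nat \<Rightarrow> real"
    and \<nu> :: "real measure"
  assumes sets_mu: "\<And>i. i \<in> {1..n} \<Longrightarrow> sets (\<mu> i) = sets borel"
    and mass: "\<And>i. i \<in> {1..n} \<Longrightarrow> emeasure (\<mu> i) UNIV = ennreal (a i)"
    and apos: "\<And>i. i \<in> {1..n} \<Longrightarrow> a i > 0"
    and asum: "(\<Sum>i\<in>{1..n}. a i) = 1"
    and nu_prob: "prob_space \<nu>"
    and nu_sets: "sets \<nu> = sets borel"
    and nu_ac: "absolutely_continuous lborel \<nu>"
    and nu_H: "entropy_H \<nu> < \<infinity>"
  shows "Liminf (at_right 0)
           (\<lambda>t. entropy_H (sum_meas \<mu> {1..n} \<star> dilate t \<nu>) / ereal \<bar>ln t\<bar>)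
       = Liminf (at_right 0)
           (\<lambda>t. (\<Sum>i\<in>{1..n}. ereal (a i) *
                  entropy_H (scale_measure (ennreal (1 / a i)) (\<mu> i) \<star> dilate t \<nu>))
                / ereal \<bar>ln t\<bar>)"
proof -
  obtain g where [measurable]: "g \<in> borel_measurable borel" and g: "\<And>x. 0 \<le> g x"
    and nu: "\<nu> = density lborel (\<lambda>x. ennreal (g x))"
    and g_mass: "(\<integral>\<^sup>+x. ennreal (g x) \<partial>lborel) = 1" and g_H: "density_entropy g < \<infinity>"
    using prob_density_finite_entropy[OF nu_prob nu_sets nu_ac nu_H] by blast
  have dilated: "dilate t \<nu> = density lborel (\<lambda>x. ennreal (g (x / t) / t))"
    "(\<integral>\<^sup>+x. ennreal (g (x / t) / t) \<partial>lborel) = 1"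
    "density_entropy (\<lambda>x. g (x / t) / t) < \<infinity>" if "0 < t" for t
    using g g_mass g_H that
    by (simp_all add: nu dilate_density_real nn_integral_dilate_density density_entropy_dilate
        less_top[symmetric] ereal_minus_eq_PInfty_iff)
  let ?L = "\<lambda>t. entropy_H (sum_meas \<mu> {1..n} \<star> dilate t \<nu>)"
  let ?R = "\<lambda>t. \<Sum>i\<in>{1..n}. ereal (a i) * entropy_H (scale_measure (ennreal (1 / a i)) (\<mu> i) \<star> dilate t \<nu>)"
  have "?L t \<le> ?R t \<and> ?R t \<le> ?L t + ereal (- (\<Sum>i\<in>{1..n}. a i * ln (a i)))" if "0 < t" for t
    using entropy_H_mixture_convolution[of "{1..n}" \<mu> a "\<lambda>x. g (x / t) / t" "dilate t \<nu>"]
      sets_mu mass apos asum g dilated[OF that] that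
    by simp
  then show ?thesis
    using apos asum by (intro Liminf_div_abs_ln_eq[OF weights_entropy_nonneg[of "{1..n}" a]]) auto
qed

end
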